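(* Let $\mathcal{P}\subseteq\mathbb{Z}_{\geq0}$, working with formal power series over a commutative ring $R\supseteq\mathbb{Q}$. Then $$\Xi^{\mathrm{CYC},\mathcal{P}}(z)=z\, e_{\mathcal{P}-1}\big(T^{\mathcal{P}}(z)\big)\,F^{\mathcal{P}}(z)^2.$$
   Context: $[n]=\{1,\dots,n\}$. $e_\mathcal{P}(z)=\sum_{n\in\mathcal{P}}z^n/n!$, $\mathcal{P}-1=\{n-1:n\in\mathcal{P},n\ge1\}$. $T^\mathcal{P}(z)=\sum_t z^{|t|}/|t|!$ over labeled rooted trees $t$ (trees on vertex set $[|t|]$ with a distinguished root) in which every vertex has a number of children in $\mathcal{P}$. Let $\mathcal{F}_n$ be the functions $f:[n]\to[n]$ with $|f^{-1}(x)|\in\mathcal{P}$ for all $x$ ($\mathcal{F}_0$ = empty function), $F^\mathcal{P}(z)=\sum_n|\mathcal{F}_n|z^n/n!$, $F^{\mathrm{CYC},\mathcal{P}}(u,z)=\sum_n\frac{z^n}{n!}\sum_{f\in\mathcal{F}_n}u^{\mathrm{cyc}(f)}$ with $\mathrm{cyc}(f)=\#\{x: f^j(x)=x\text{ for some }j\ge1\}$, and $\Xi^{\mathrm{CYC},\mathcal{P}}(z)=\big(\partial_uF^{\mathrm{CYC},\mathcal{P}}(u,z)\big)|_{u=1}$. *)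

theory Defs
  imports "HOL-Computational_Algebra.Polynomial" "HOL-Computational_Algebra.Formal_Power_Series"
    "HOL-Library.FuncSet"
begin

definition expP :: "nat set \<Rightarrow> 'a::field_char_0 fps" where
  "expP P = Abs_fps (\<lambda>n. if n \<in> P then 1 / fact n else 0)"

definition shiftP :: "nat set \<Rightarrow> nat set" where
  "shiftP P = {m. \<exists>n\<in>P. n \<ge> 1 \<and> m = n - 1}"

text \<open>Labeled rooted trees on vertex set [n], encoded by root r and parent map p
  (defined on [n] minus the root), such that every vertex reaches the root.\<close>
definition ptrees :: "nat set \<Rightarrow> nat \<Rightarrow> (nat \<times> (nat \<Rightarrow> nat)) set" where
  "ptrees P n = {(r, p). r \<in> {1..n} \<and> p \<in> ({1..n} - {r}) \<rightarrow>\<^sub>E {1..n}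
      \<and> (\<forall>x\<in>{1..n}. \<exists>k. (p ^^ k) x = r)
      \<and> (\<forall>x\<in>{1..n}. card {y \<in> {1..n} - {r}. p y = x} \<in> P)}"

definition treeGF :: "nat set \<Rightarrow> 'a::field_char_0 fps" where
  "treeGF P = Abs_fps (\<lambda>n. of_nat (card (ptrees P n)) / fact n)"

definition pfuns :: "nat set \<Rightarrow> nat \<Rightarrow> (nat \<Rightarrow> nat) set" where
  "pfuns P n = {f \<in> {1..n} \<rightarrow>\<^sub>E {1..n}. \<forall>x\<in>{1..n}. card {y \<in> {1..n}. f y = x} \<in> P}"

definition funGF :: "nat set \<Rightarrow> 'a::field_char_0 fps" where
  "funGF P = Abs_fps (\<lambda>n. of_nat (card (pfuns P n)) / fact n)"

definition cyc :: "nat \<Rightarrow> (nat \<Rightarrow> nat) \<Rightarrow> nat" where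
  "cyc n f = card {x \<in> {1..n}. \<exists>j\<ge>1. (f ^^ j) x = x}"

text \<open>Bivariate series F^{CYC,P}(u,z): power series in z with polynomial (in u) coefficients.\<close>
definition funCycGF :: "nat set \<Rightarrow> 'a::field_char_0 poly fps" where
  "funCycGF P = Abs_fps (\<lambda>n. smult (1 / fact n) (\<Sum>f\<in>pfuns P n. monom 1 (cyc n f)))"

definition XiCyc :: "nat set \<Rightarrow> 'a::field_char_0 fps" where
  "XiCyc P = Abs_fps (\<lambda>n. poly (pderiv (fps_nth (funCycGF P) n)) 1)"

end

theory Submission
  imports Defs "HOL-Combinatorics.Permutations"
begin

text \<open>A function \<open>f\<close> on \<open>[n]\<close> is the same as its set \<open>Z\<close> of cyclic points, the permutation
  it induces on \<open>Z\<close>, and the forest formed by its remaining arrows, whose roots are the points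
  of \<open>Z\<close>. The fibre condition on \<open>f\<close> says that in this forest every root has a number of
  children in \<open>P - 1\<close> (one preimage of a root lies on its cycle) and every other vertex a number
  in \<open>P\<close>. The EGF of trees of this kind is \<open>R = z e\<^sub>P\<^sub>-\<^sub>1(T)\<close>. Splitting off one tree
  at a time shows that the forests on \<open>[n]\<close> with a fixed set of \<open>k\<close> roots are counted by
  \<open>(n - k)! [z\<^sup>n] R\<^sup>k\<close>; summing over the \<open>k!\<close> permutations and the choices of \<open>Z\<close> gives
  \<open>F = \<Sum>\<^sub>k R\<^sup>k = 1/(1 - R)\<close>, and weighting by \<open>k = cyc f\<close> gives
  \<open>\<Xi> = \<Sum>\<^sub>k k R\<^sup>k = R/(1 - R)\<^sup>2 = R F\<^sup>2\<close>.\<close>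

section \<open>Descending to a root\<close>

inductive reach :: "('a \<Rightarrow> 'a) \<Rightarrow> 'a set \<Rightarrow> 'a \<Rightarrow> 'a \<Rightarrow> bool" for p Z where
  reach_root: "x \<in> Z \<Longrightarrow> reach p Z x x"
| reach_parent: "x \<notin> Z \<Longrightarrow> reach p Z (p x) r \<Longrightarrow> reach p Z x r"

lemma reach_root_in: "reach p Z x r \<Longrightarrow> r \<in> Z"
  by (induction rule: reach.induct) auto

lemma reach_root_iff: "x \<in> Z \<Longrightarrow> reach p Z x r \<longleftrightarrow> r = x"
  by (auto elim: reach.cases intro: reach_root)

lemma reach_parent_iff: "x \<notin> Z \<Longrightarrow> reach p Z x r \<longleftrightarrow> reach p Z (p x) r"
  by (auto elim: reach.cases intro: reach_parent)

lemma reach_unique: "reach p Z x r \<Longrightarrow> reach p Z x r' \<Longrightarrow> r = r'"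
  by (induction arbitrary: r' rule: reach.induct) (auto simp: reach_root_iff reach_parent_iff)

lemma reach_cong:
  assumes "reach p Z x r" "x \<in> A" "\<forall>y\<in>A - Z. p y \<in> A \<and> q y = p y" "A \<inter> Z' = A \<inter> Z"
  shows "reach q Z' x r"
  using assms by (induction rule: reach.induct) (auto intro: reach_root reach_parent)

lemma reach_map:
  assumes "reach p Z x r" "x \<in> A" "\<forall>y\<in>A - Z. p y \<in> A \<and> q (h y) = h (p y)"
    "\<forall>y\<in>A. h y \<in> Z' \<longleftrightarrow> y \<in> Z"
  shows "reach q Z' (h x) (h r)"
  using assms by (induction rule: reach.induct) (auto intro: reach_root reach_parent)

lemma reach_imp_funpow: "reach p Z x r \<Longrightarrow> \<exists>k. (p ^^ k) x = r"
proof (induction rule: reach.induct)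
  case (reach_root x)
  show ?case by (rule exI[of _ 0]) simp
next
  case (reach_parent x r)
  then obtain k where "(p ^^ k) (p x) = r" by blast
  then have "(p ^^ Suc k) x = r" by (simp add: funpow_swap1)
  then show ?case by blast
qed

lemma funpow_in_imp_reach: "(p ^^ k) x \<in> Z \<Longrightarrow> \<exists>r. reach p Z x r"
proof (induction k arbitrary: x)
  case 0
  then show ?case by (auto intro: reach_root)
next
  case (Suc k)
  show ?case
  proof (cases "x \<in> Z")
    case False
    have "(p ^^ k) (p x) \<in> Z" using Suc.prems by (simp add: funpow_swap1)
    with Suc.IH False show ?thesis by (auto intro: reach_parent)
  qed (auto intro: reach_root)
qed

lemma reach_singleton_iff_funpow: "reach p {r} x r \<longleftrightarrow> (\<exists>k. (p ^^ k) x = r)"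
proof
  assume "\<exists>k. (p ^^ k) x = r"
  then obtain r' where "reach p {r} x r'" using funpow_in_imp_reach[where Z = "{r}"] by blast
  then show "reach p {r} x r" using reach_root_in by fastforce
qed (rule reach_imp_funpow)

section \<open>Forests given by parent maps\<close>

text \<open>A forest is given by the parent map of its non-roots; requiring every vertex to reach a
  root excludes cycles.\<close>

definition forests :: "nat set \<Rightarrow> nat set \<Rightarrow> 'a set \<Rightarrow> 'a set \<Rightarrow> ('a \<Rightarrow> 'a) set" where
  "forests P Q S Z = {p \<in> (S - Z) \<rightarrow>\<^sub>E S. (\<forall>x\<in>S. \<exists>r. reach p Z x r)
     \<and> (\<forall>x\<in>S. card {y \<in> S - Z. p y = x} \<in> (if x \<in> Z then Q else P))}"

lemma finite_forests: "finite S \<Longrightarrow> finite (forests P Q S Z)"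
  unfolding forests_def by (rule finite_subset[of _ "(S - Z) \<rightarrow>\<^sub>E S"]) (auto intro: finite_PiE)

definition transport :: "('a \<Rightarrow> 'b) \<Rightarrow> 'a set \<Rightarrow> 'a set \<Rightarrow> ('a \<Rightarrow> 'a) \<Rightarrow> 'b \<Rightarrow> 'b" where
  "transport h S Z p = restrict (\<lambda>y. h (p (inv_into S h y))) (h ` S - h ` Z)"

lemma transport_forests:
  assumes h: "bij_betw h S S'" and Z: "Z \<subseteq> S" and p: "p \<in> forests P Q S Z"
  shows "transport h S Z p \<in> forests P Q S' (h ` Z)"
proof -
  have S': "S' = h ` S" and inj: "inj_on h S" using h by (auto simp: bij_betw_def)
  have pf: "p \<in> (S - Z) \<rightarrow>\<^sub>E S" and rch: "\<forall>x\<in>S. \<exists>r. reach p Z x r"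
    and deg: "\<forall>x\<in>S. card {y \<in> S - Z. p y = x} \<in> (if x \<in> Z then Q else P)"
    using p by (auto simp: forests_def)
  define q where "q = transport h S Z p"
  have hZ: "\<And>x. x \<in> S \<Longrightarrow> h x \<in> h ` Z \<longleftrightarrow> x \<in> Z"
    using inj Z by (auto dest: inj_onD)
  have qh: "\<And>x. x \<in> S - Z \<Longrightarrow> q (h x) = h (p x)"
    using inj hZ by (auto simp: q_def transport_def)
  have "q \<in> (S' - h ` Z) \<rightarrow>\<^sub>E S'"
  proof
    fix y assume "y \<in> S' - h ` Z"
    then obtain x where "x \<in> S - Z" "y = h x" using S' by auto
    then show "q y \<in> S'" using qh pf S' by auto
  qed (auto simp: q_def transport_def S')
  moreover have "\<exists>r. reach q (h ` Z) y r" if "y \<in> S'" for y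
  proof -
    obtain x where x: "x \<in> S" "y = h x" using S' \<open>y \<in> S'\<close> by auto
    obtain r where "reach p Z x r" using rch x by auto
    then have "reach q (h ` Z) (h x) (h r)"
      by (rule reach_map[where A = S]) (use x pf qh hZ in auto)
    then show ?thesis using x by auto
  qed
  moreover have "card {v \<in> S' - h ` Z. q v = y} \<in> (if y \<in> h ` Z then Q else P)" if "y \<in> S'" for y
  proof -
    obtain x where x: "x \<in> S" "y = h x" using S' \<open>y \<in> S'\<close> by auto
    have "{v \<in> S' - h ` Z. q v = y} = h ` {u \<in> S - Z. p u = x}"
    proof (intro set_eqI iffI)
      fix v assume v: "v \<in> {v \<in> S' - h ` Z. q v = y}"
      then obtain u where u: "u \<in> S - Z" "v = h u" using S' by auto
      then have "h (p u) = h x" using v qh x by auto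
      then have "p u = x" using inj pf u x by (auto dest: inj_onD)
      then show "v \<in> h ` {u \<in> S - Z. p u = x}" using u by auto
    qed (use qh hZ S' x in auto)
    moreover have "card (h ` {u \<in> S - Z. p u = x}) = card {u \<in> S - Z. p u = x}"
      by (rule card_image) (rule inj_on_subset[OF inj], auto)
    ultimately show ?thesis using deg x hZ by auto
  qed
  ultimately show ?thesis unfolding q_def[symmetric] forests_def by blast
qed

lemma inj_on_transport:
  assumes h: "bij_betw h S S'" and Z: "Z \<subseteq> S"
  shows "inj_on (transport h S Z) (forests P Q S Z)"
proof (rule inj_onI)
  fix p q assume p: "p \<in> forests P Q S Z" and q: "q \<in> forests P Q S Z"
    and eq: "transport h S Z p = transport h S Z q"
  have inj: "inj_on h S" using h by (simp add: bij_betw_def)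
  have pf: "p \<in> (S - Z) \<rightarrow>\<^sub>E S" "q \<in> (S - Z) \<rightarrow>\<^sub>E S" using p q by (auto simp: forests_def)
  show "p = q"
  proof
    fix x
    show "p x = q x"
    proof (cases "x \<in> S - Z")
      case True
      then have "h x \<in> h ` S - h ` Z" using inj Z by (auto dest: inj_onD)
      then have "h (p x) = h (q x)"
        using fun_cong[OF eq, of "h x"] True inj by (simp add: transport_def)
      then show ?thesis using inj pf True by (auto dest: inj_onD)
    qed (use pf in \<open>auto simp: PiE_def extensional_def\<close>)
  qed
qed

lemma card_forests_bij_betw:
  assumes h: "bij_betw h S S'" and Z: "Z \<subseteq> S" and fin: "finite S"
  shows "card (forests P Q S Z) = card (forests P Q S' (h ` Z))"
proof (rule antisym)
  have "finite S'" using h fin bij_betw_finite by blast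
  then show "card (forests P Q S Z) \<le> card (forests P Q S' (h ` Z))"
    by (intro card_inj_on_le[OF inj_on_transport[OF h Z]] image_subsetI transport_forests[OF h Z]
        finite_forests)
  have h': "bij_betw (inv_into S h) S' S" using h by (rule bij_betw_inv_into)
  have Z': "h ` Z \<subseteq> S'" using h Z by (auto simp: bij_betw_def)
  have "card (forests P Q S' (h ` Z)) \<le> card (forests P Q S (inv_into S h ` h ` Z))"
    by (intro card_inj_on_le[OF inj_on_transport[OF h' Z']] image_subsetI transport_forests[OF h' Z']
        finite_forests[OF fin])
  moreover have "inv_into S h ` h ` Z = Z"
    using h Z by (meson bij_betw_imp_inj_on inv_into_image_cancel)
  ultimately show "card (forests P Q S' (h ` Z)) \<le> card (forests P Q S Z)" by simp
qed

definition forest_count :: "nat set \<Rightarrow> nat set \<Rightarrow> nat \<Rightarrow> nat \<Rightarrow> nat" where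
  "forest_count P Q n k = card (forests P Q {..<n} {..<k})"

lemma card_forests:
  assumes fin: "finite S" and Z: "Z \<subseteq> S"
  shows "card (forests P Q S Z) = forest_count P Q (card S) (card Z)"
proof -
  define S' :: "nat set" where "S' = {..<card S}"
  define Z' :: "nat set" where "Z' = {..<card Z}"
  have finZ: "finite Z" using fin Z finite_subset by blast
  have Z'S': "Z' \<subseteq> S'" using card_mono[OF fin Z] by (auto simp: S'_def Z'_def)
  have "\<exists>h1. bij_betw h1 Z Z'" by (rule finite_same_card_bij) (simp_all add: finZ Z'_def)
  then obtain h1 where h1: "bij_betw h1 Z Z'" by blast
  have "card (S - Z) = card (S' - Z')"
    using Z Z'S' finZ by (simp add: card_Diff_subset S'_def Z'_def)
  then have "\<exists>h2. bij_betw h2 (S - Z) (S' - Z')"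
    by (intro finite_same_card_bij) (simp_all add: fin S'_def)
  then obtain h2 where h2: "bij_betw h2 (S - Z) (S' - Z')" by blast
  define h where "h x = (if x \<in> Z then h1 x else h2 x)" for x
  have "bij_betw h (Z \<union> (S - Z)) (Z' \<union> (S' - Z'))"
    unfolding h_def by (rule bij_betw_disjoint_Un[OF h1 h2]) auto
  then have "bij_betw h S S'" using Z Z'S' by (simp add: Un_absorb1)
  then have "card (forests P Q S Z) = card (forests P Q S' (h ` Z))"
    by (rule card_forests_bij_betw[OF _ Z fin])
  moreover have "h ` Z = Z'" using h1 by (auto simp: h_def bij_betw_def)
  ultimately show ?thesis by (simp add: forest_count_def S'_def Z'_def)
qed

lemma forest_count_no_roots: "forest_count P Q n 0 = (if n = 0 then 1 else 0)"
proof (cases "n = 0")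
  case True
  have "forests P Q {} {} = {\<lambda>_ :: nat. undefined}" by (auto simp: forests_def)
  then show ?thesis using True by (simp add: forest_count_def)
next
  case False
  have "\<not> reach p {} 0 r" for p r using reach_root_in by fastforce
  then have "forests P Q {..<n} {} = {}" using False by (auto simp: forests_def)
  then show ?thesis using False by (simp add: forest_count_def)
qed

section \<open>Splitting off one tree\<close>

lemma forests_restrict:
  assumes p: "p \<in> forests P Q S Z" and U: "U \<subseteq> S"
    and closed: "\<forall>y\<in>S - Z. p y \<in> U \<longleftrightarrow> y \<in> U"
  shows "restrict p (U - Z) \<in> forests P Q U (U \<inter> Z)"
proof -
  have rch: "\<forall>x\<in>S. \<exists>r. reach p Z x r"
    and deg: "\<forall>x\<in>S. card {y \<in> S - Z. p y = x} \<in> (if x \<in> Z then Q else P)"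
    using p by (auto simp: forests_def)
  have UZ: "U - U \<inter> Z = U - Z" by blast
  have "restrict p (U - Z) \<in> (U - Z) \<rightarrow>\<^sub>E U" using closed U by auto
  moreover have "\<exists>r. reach (restrict p (U - Z)) (U \<inter> Z) x r" if x: "x \<in> U" for x
  proof -
    obtain r where "reach p Z x r" using rch U x by auto
    moreover have "\<forall>y\<in>U - Z. p y \<in> U \<and> restrict p (U - Z) y = p y" using closed U by auto
    ultimately have "reach (restrict p (U - Z)) (U \<inter> Z) x r"
      using reach_cong[where A = U] x by blast
    then show ?thesis by blast
  qed
  moreover have "card {y \<in> U - Z. restrict p (U - Z) y = x} \<in> (if x \<in> U \<inter> Z then Q else P)"
    if x: "x \<in> U" for x
  proof -
    have "{y \<in> U - Z. restrict p (U - Z) y = x} = {y \<in> S - Z. p y = x}"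
      using x closed U by auto
    moreover have "x \<in> S" using x U by blast
    ultimately show ?thesis using deg x by auto
  qed
  ultimately show ?thesis unfolding forests_def UZ by blast
qed

lemma override_on_forests:
  assumes p1: "p1 \<in> forests P Q U Z1" and p2: "p2 \<in> forests P Q V Z2"
    and "Z1 \<subseteq> U" "Z2 \<subseteq> V" "U \<inter> V = {}"
  shows "override_on p2 p1 U \<in> forests P Q (U \<union> V) (Z1 \<union> Z2)"
proof -
  define m where "m = override_on p2 p1 U"
  have p1f: "p1 \<in> (U - Z1) \<rightarrow>\<^sub>E U" and r1: "\<forall>x\<in>U. \<exists>r. reach p1 Z1 x r"
    and d1: "\<forall>x\<in>U. card {y \<in> U - Z1. p1 y = x} \<in> (if x \<in> Z1 then Q else P)"
    using p1 by (auto simp: forests_def)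
  have p2f: "p2 \<in> (V - Z2) \<rightarrow>\<^sub>E V" and r2: "\<forall>x\<in>V. \<exists>r. reach p2 Z2 x r"
    and d2: "\<forall>x\<in>V. card {y \<in> V - Z2. p2 y = x} \<in> (if x \<in> Z2 then Q else P)"
    using p2 by (auto simp: forests_def)
  have "m \<in> (U \<union> V - (Z1 \<union> Z2)) \<rightarrow>\<^sub>E (U \<union> V)"
    using p1f p2f assms(3-5) by (auto simp: m_def override_on_def PiE_iff extensional_def)
  moreover have "\<exists>r. reach m (Z1 \<union> Z2) x r" if x: "x \<in> U \<union> V" for x
  proof (cases "x \<in> U")
    case True
    then obtain r where "reach p1 Z1 x r" using r1 by blast
    then have "reach m (Z1 \<union> Z2) x r"
      by (rule reach_cong[where A = U]) (use True p1f assms(3-5) in \<open>auto simp: m_def override_on_def\<close>)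
    then show ?thesis by blast
  next
    case False
    then obtain r where "reach p2 Z2 x r" using r2 x by blast
    then have "reach m (Z1 \<union> Z2) x r"
      by (rule reach_cong[where A = V]) (use False x p2f assms(3-5) in \<open>auto simp: m_def override_on_def\<close>)
    then show ?thesis by blast
  qed
  moreover have "card {y \<in> U \<union> V - (Z1 \<union> Z2). m y = x} \<in> (if x \<in> Z1 \<union> Z2 then Q else P)"
    if "x \<in> U \<union> V" for x
  proof (cases "x \<in> U")
    case True
    have "{y \<in> U \<union> V - (Z1 \<union> Z2). m y = x} = {y \<in> U - Z1. p1 y = x}"
      using True PiE_mem[OF p2f] assms(3-5) by (auto simp: m_def override_on_def disjoint_iff) metis
    then show ?thesis using d1 True assms(3-5) by auto
  next
    case False
    have "{y \<in> U \<union> V - (Z1 \<union> Z2). m y = x} = {y \<in> V - Z2. p2 y = x}"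
      using False PiE_mem[OF p1f] assms(3-5) by (auto simp: m_def override_on_def disjoint_iff)
    then show ?thesis using d2 False that assms(3-5) by auto
  qed
  ultimately show ?thesis unfolding forests_def m_def by blast
qed

definition tree_of :: "('a \<Rightarrow> 'a) \<Rightarrow> 'a set \<Rightarrow> 'a set \<Rightarrow> 'a \<Rightarrow> 'a set" where
  "tree_of p S Z z = {x \<in> S. reach p Z x z}"

lemma tree_of_parent_iff:
  assumes "p \<in> forests P Q S Z" "y \<in> S - Z"
  shows "p y \<in> tree_of p S Z z \<longleftrightarrow> y \<in> tree_of p S Z z"
  using assms reach_parent_iff[of y Z p z] by (auto simp: tree_of_def forests_def)

lemma tree_of_inter_roots: "z \<in> Z \<Longrightarrow> Z \<subseteq> S \<Longrightarrow> tree_of p S Z z \<inter> Z = {z}"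
  by (auto simp: tree_of_def reach_root_iff intro: reach_root)

lemma tree_of_override_on:
  assumes p1: "p1 \<in> forests P Q U {z}" and p2: "p2 \<in> forests P Q V Z2"
    and "z \<in> U" "Z2 \<subseteq> V" "U \<inter> V = {}"
  shows "tree_of (override_on p2 p1 U) (U \<union> V) (insert z Z2) z = U"
proof -
  define m where "m = override_on p2 p1 U"
  have p1f: "p1 \<in> (U - {z}) \<rightarrow>\<^sub>E U" and r1: "\<forall>x\<in>U. \<exists>r. reach p1 {z} x r"
    using p1 by (auto simp: forests_def)
  have p2f: "p2 \<in> (V - Z2) \<rightarrow>\<^sub>E V" and r2: "\<forall>x\<in>V. \<exists>r. reach p2 Z2 x r"
    using p2 by (auto simp: forests_def)
  have "reach m (insert z Z2) x z" if x: "x \<in> U" for x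
  proof -
    obtain r where r: "reach p1 {z} x r" using r1 x by blast
    then have "r = z" using reach_root_in by fastforce
    from r have "reach m (insert z Z2) x r"
      by (rule reach_cong[where A = U]) (use x p1f assms(3-5) in \<open>auto simp: m_def override_on_def\<close>)
    with \<open>r = z\<close> show ?thesis by simp
  qed
  moreover have "\<not> reach m (insert z Z2) x z" if x: "x \<in> V" for x
  proof
    obtain r where r: "reach p2 Z2 x r" using r2 x by blast
    then have "r \<noteq> z" using reach_root_in assms(3-5) by fastforce
    from r have "reach m (insert z Z2) x r"
      by (rule reach_cong[where A = V]) (use x p2f assms(3-5) in \<open>auto simp: m_def override_on_def\<close>)
    moreover assume "reach m (insert z Z2) x z"
    ultimately show False using reach_unique \<open>r \<noteq> z\<close> by metis
  qed
  ultimately show ?thesis by (auto simp: tree_of_def m_def)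
qed

lemma decompose_override_on_forests:
  assumes Z: "Z \<subseteq> S" "z \<in> Z" and U: "z \<in> U" "U \<subseteq> S - (Z - {z})"
    and p1: "p1 \<in> forests P Q U {z}" and p2: "p2 \<in> forests P Q (S - U) (Z - {z})"
  shows "tree_of (override_on p2 p1 U) S Z z = U"
    and "restrict (override_on p2 p1 U) (U - {z}) = p1"
    and "restrict (override_on p2 p1 U) (S - U - (Z - {z})) = p2"
proof -
  have "tree_of (override_on p2 p1 U) (U \<union> (S - U)) (insert z (Z - {z})) z = U"
    by (rule tree_of_override_on[OF p1 p2]) (use U Z in auto)
  moreover have "U \<union> (S - U) = S" "insert z (Z - {z}) = Z" using U Z by auto
  ultimately show "tree_of (override_on p2 p1 U) S Z z = U" by simp
  show "restrict (override_on p2 p1 U) (U - {z}) = p1"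
    using p1 by (auto simp: forests_def restrict_def PiE_def extensional_def fun_eq_iff)
  show "restrict (override_on p2 p1 U) (S - U - (Z - {z})) = p2"
    using p2 by (auto simp: forests_def restrict_def PiE_def extensional_def fun_eq_iff)
qed

lemma split_forests_tree_of:
  assumes Z: "Z \<subseteq> S" "z \<in> Z" and p: "p \<in> forests P Q S Z"
  defines "U \<equiv> tree_of p S Z z"
  shows "z \<in> U" and "U \<subseteq> S - (Z - {z})"
    and "restrict p (U - {z}) \<in> forests P Q U {z}"
    and "restrict p (S - U - (Z - {z})) \<in> forests P Q (S - U) (Z - {z})"
proof -
  have US: "U \<subseteq> S" and UZ: "U \<inter> Z = {z}"
    using tree_of_inter_roots[OF Z(2,1)] by (auto simp: U_def tree_of_def)
  then show "z \<in> U" "U \<subseteq> S - (Z - {z})" by auto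
  have closed: "\<forall>y\<in>S - Z. p y \<in> U \<longleftrightarrow> y \<in> U"
    using tree_of_parent_iff[OF p] by (simp add: U_def)
  have "restrict p (U - Z) \<in> forests P Q U (U \<inter> Z)"
    by (rule forests_restrict[OF p US closed])
  moreover have "U - Z = U - {z}" using UZ by blast
  ultimately show "restrict p (U - {z}) \<in> forests P Q U {z}" using UZ by simp
  have "restrict p (S - U - Z) \<in> forests P Q (S - U) ((S - U) \<inter> Z)"
    by (rule forests_restrict[OF p]) (use closed p in \<open>auto simp: forests_def\<close>)
  moreover have "S - U - Z = S - U - (Z - {z})" "(S - U) \<inter> Z = Z - {z}" using UZ Z by auto
  ultimately show "restrict p (S - U - (Z - {z})) \<in> forests P Q (S - U) (Z - {z})" by simp
qed

lemma bij_betw_forests_split: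
  assumes Z: "Z \<subseteq> S" "z \<in> Z"
  shows "bij_betw (\<lambda>(U, p1, p2). override_on p2 p1 U)
    (SIGMA U:{U. z \<in> U \<and> U \<subseteq> S - (Z - {z})}. forests P Q U {z} \<times> forests P Q (S - U) (Z - {z}))
    (forests P Q S Z)"
proof (rule bij_betw_byWitness[where f' = "\<lambda>p. let U = tree_of p S Z z in
    (U, restrict p (U - {z}), restrict p (S - U - (Z - {z})))"])
  show "\<forall>a\<in>SIGMA U:{U. z \<in> U \<and> U \<subseteq> S - (Z - {z})}. forests P Q U {z} \<times> forests P Q (S - U) (Z - {z}).
      (let U = tree_of ((\<lambda>(U, p1, p2). override_on p2 p1 U) a) S Z z
       in (U, restrict ((\<lambda>(U, p1, p2). override_on p2 p1 U) a) (U - {z}),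
           restrict ((\<lambda>(U, p1, p2). override_on p2 p1 U) a) (S - U - (Z - {z})))) = a"
    using decompose_override_on_forests[OF Z] by (auto simp: Let_def)
  show "\<forall>p\<in>forests P Q S Z. (\<lambda>(U, p1, p2). override_on p2 p1 U)
      (let U = tree_of p S Z z in (U, restrict p (U - {z}), restrict p (S - U - (Z - {z})))) = p"
    using Z by (auto simp: forests_def Let_def override_on_def fun_eq_iff tree_of_def PiE_def
        extensional_def)
  show "(\<lambda>(U, p1, p2). override_on p2 p1 U) `
      (SIGMA U:{U. z \<in> U \<and> U \<subseteq> S - (Z - {z})}. forests P Q U {z} \<times> forests P Q (S - U) (Z - {z}))
      \<subseteq> forests P Q S Z"
  proof clarsimp
    fix U p1 p2
    assume U: "z \<in> U" "U \<subseteq> S - (Z - {z})" and p1: "p1 \<in> forests P Q U {z}"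
      and p2: "p2 \<in> forests P Q (S - U) (Z - {z})"
    have "override_on p2 p1 U \<in> forests P Q (U \<union> (S - U)) ({z} \<union> (Z - {z}))"
      by (rule override_on_forests[OF p1 p2]) (use U Z in auto)
    moreover have "U \<union> (S - U) = S" "{z} \<union> (Z - {z}) = Z" using U Z by auto
    ultimately show "override_on p2 p1 U \<in> forests P Q S Z" by simp
  qed
  show "(\<lambda>p. let U = tree_of p S Z z in (U, restrict p (U - {z}), restrict p (S - U - (Z - {z})))) `
      forests P Q S Z
      \<subseteq> (SIGMA U:{U. z \<in> U \<and> U \<subseteq> S - (Z - {z})}. forests P Q U {z} \<times> forests P Q (S - U) (Z - {z}))"
    using split_forests_tree_of[OF Z] by (intro image_subsetI) (simp add: Let_def)
qed

lemma card_forests_split: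
  assumes "finite S" "Z \<subseteq> S" "z \<in> Z"
  shows "card (forests P Q S Z) = (\<Sum>U | z \<in> U \<and> U \<subseteq> S - (Z - {z}).
    card (forests P Q U {z}) * card (forests P Q (S - U) (Z - {z})))"
proof -
  have "finite {U. z \<in> U \<and> U \<subseteq> S - (Z - {z})}"
    by (rule finite_subset[of _ "Pow S"]) (use assms in auto)
  moreover have "finite U" if "U \<subseteq> S - (Z - {z})" for U
    using that assms(1) finite_subset by blast
  ultimately show ?thesis
    using bij_betw_same_card[OF bij_betw_forests_split[OF assms(2,3)]] assms(1)
    by (simp add: card_cartesian_product finite_forests)
qed

lemma sum_Pow_card:
  fixes g :: "nat \<Rightarrow> 'b::comm_semiring_1"
  assumes "finite A"
  shows "(\<Sum>V\<in>Pow A. g (card V)) = (\<Sum>j\<le>card A. of_nat (card A choose j) * g j)"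
proof -
  have "(\<Sum>V\<in>Pow A. g (card V)) = (\<Sum>j\<le>card A. \<Sum>V | V \<in> Pow A \<and> card V = j. g (card V))"
    by (rule sum.group[symmetric]) (use assms card_mono in auto)
  also have "\<dots> = (\<Sum>j\<le>card A. of_nat (card A choose j) * g j)"
  proof (rule sum.cong[OF refl])
    fix j
    have "{V. V \<in> Pow A \<and> card V = j} = {B. B \<subseteq> A \<and> card B = j}" by auto
    then show "(\<Sum>V | V \<in> Pow A \<and> card V = j. g (card V)) = of_nat (card A choose j) * g j"
      using n_subsets[OF assms] by simp
  qed
  finally show ?thesis .
qed

lemma forest_count_split:
  "forest_count P Q (m + Suc k) (Suc k) =
    (\<Sum>j\<le>m. (m choose j) * (forest_count P Q (Suc j) 1 * forest_count P Q (m - j + k) k))"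
proof -
  define S :: "nat set" where "S = {..<m + Suc k}"
  define Z :: "nat set" where "Z = {..<Suc k}"
  have fin: "finite S" and ZS: "Z \<subseteq> S" and zZ: "0 \<in> Z" by (auto simp: S_def Z_def)
  have cSZ: "card (S - Z) = m" by (simp add: S_def Z_def card_Diff_subset)
  have "forest_count P Q (m + Suc k) (Suc k) = card (forests P Q S Z)"
    by (simp add: forest_count_def S_def Z_def)
  also have "\<dots> = (\<Sum>U | 0 \<in> U \<and> U \<subseteq> S - (Z - {0}).
      card (forests P Q U {0}) * card (forests P Q (S - U) (Z - {0})))"
    by (rule card_forests_split[OF fin ZS zZ])
  also have "\<dots> = (\<Sum>V\<in>Pow (S - Z).
      card (forests P Q (insert 0 V) {0}) * card (forests P Q (S - insert 0 V) (Z - {0})))"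
    by (rule sum.reindex_bij_witness[where i = "insert 0" and j = "\<lambda>U. U - {0}"])
      (use zZ ZS in \<open>auto simp: insert_absorb\<close>)
  also have "\<dots> = (\<Sum>V\<in>Pow (S - Z).
      forest_count P Q (Suc (card V)) 1 * forest_count P Q (m - card V + k) k)"
  proof (rule sum.cong[OF refl])
    fix V assume V: "V \<in> Pow (S - Z)"
    have fV: "finite V" and zV: "0 \<notin> V" using V fin zZ finite_subset by auto
    have "card V \<le> m" using card_mono[of "S - Z" V] V fin cSZ by auto
    then have "card (S - insert 0 V) = m - card V + k"
      using V zZ fV zV by (subst card_Diff_subset) (auto simp: S_def Z_def)
    moreover have "card (Z - {0}) = k" by (simp add: Z_def)
    moreover have "Z - {0} \<subseteq> S - insert 0 V" using V ZS by auto
    ultimately show "card (forests P Q (insert 0 V) {0}) * card (forests P Q (S - insert 0 V) (Z - {0}))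
      = forest_count P Q (Suc (card V)) 1 * forest_count P Q (m - card V + k) k"
      using card_forests[of "insert 0 V" "{0}"] card_forests[of "S - insert 0 V" "Z - {0}"]
        fin fV zV by simp
  qed
  also have "\<dots> = (\<Sum>j\<le>m. (m choose j) * (forest_count P Q (Suc j) 1 * forest_count P Q (m - j + k) k))"
    using sum_Pow_card[of "S - Z" "\<lambda>j. forest_count P Q (Suc j) 1 * forest_count P Q (m - j + k) k"]
      fin cSZ by simp
  finally show ?thesis .
qed

section \<open>Removing the root of a tree\<close>

lemma override_on_root_forests:
  assumes r: "r \<in> S" and M: "M \<subseteq> S - {r}" "card M \<in> Q" and p: "p \<in> forests P P (S - {r}) M"
  shows "override_on p (\<lambda>_. r) M \<in> forests P Q S {r}"
    and "{y \<in> S - {r}. override_on p (\<lambda>_. r) M y = r} = M"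
    and "restrict (override_on p (\<lambda>_. r) M) (S - {r} - M) = p"
proof -
  define q where "q = override_on p (\<lambda>_. r) M"
  have pf: "p \<in> (S - {r} - M) \<rightarrow>\<^sub>E (S - {r})" and rch: "\<forall>x\<in>S - {r}. \<exists>m. reach p M x m"
    and deg: "\<forall>x\<in>S - {r}. card {y \<in> S - {r} - M. p y = x} \<in> P"
    using p by (auto simp: forests_def)
  have qM: "q x = r" if "x \<in> M" for x using that by (simp add: q_def)
  have qp: "q x = p x" if "x \<notin> M" for x using that by (simp add: q_def)
  have children: "{y \<in> S - {r}. q y = r} = M"
    using M(1) PiE_mem[OF pf] qM qp by fastforce
  have "q \<in> (S - {r}) \<rightarrow>\<^sub>E S"
    using pf M(1) r by (auto simp: q_def override_on_def PiE_iff extensional_def)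
  moreover have "reach q {r} x r" if x: "x \<in> S - {r}" for x
  proof -
    obtain m where "reach p M x m" using rch x by blast
    then show ?thesis using x
    proof (induction rule: reach.induct)
      case (reach_root x)
      then show ?case using qM by (auto intro: reach.intros)
    next
      case (reach_parent x m)
      then have "reach q {r} (q x) r" using PiE_mem[OF pf] qp by auto
      then show ?case using reach_parent.prems by (auto intro: reach.reach_parent)
    qed
  qed
  moreover have "card {y \<in> S - {r}. q y = x} \<in> (if x \<in> {r} then Q else P)" if x: "x \<in> S" for x
  proof (cases "x = r")
    case False
    have "{y \<in> S - {r}. q y = x} = {y \<in> S - {r} - M. p y = x}"
      using False by (auto simp: q_def override_on_def)
    then show ?thesis using deg x False by auto
  qed (use children M in simp)
  ultimately show "q \<in> forests P Q S {r}" unfolding forests_def by (auto intro: reach_root)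
  show "{y \<in> S - {r}. q y = r} = M" by (rule children)
  show "restrict q (S - {r} - M) = p"
    using pf by (auto simp: q_def restrict_def PiE_def extensional_def fun_eq_iff)
qed

lemma restrict_root_forests:
  assumes r: "r \<in> S" and p: "p \<in> forests P Q S {r}"
  defines "M \<equiv> {y \<in> S - {r}. p y = r}"
  shows "restrict p (S - {r} - M) \<in> forests P P (S - {r}) M"
proof -
  have pf: "p \<in> (S - {r}) \<rightarrow>\<^sub>E S" and rch: "\<forall>x\<in>S. \<exists>r'. reach p {r} x r'"
    and deg: "\<forall>x\<in>S. card {y \<in> S - {r}. p y = x} \<in> (if x \<in> {r} then Q else P)"
    using p by (auto simp: forests_def)
  define p' where "p' = restrict p (S - {r} - M)"
  have "p' \<in> (S - {r} - M) \<rightarrow>\<^sub>E (S - {r})"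
    using PiE_mem[OF pf] by (auto simp: p'_def M_def)
  moreover have "\<exists>m. reach p' M x m" if x: "x \<in> S - {r}" for x
  proof -
    obtain r' where "reach p {r} x r'" using rch x by blast
    then show ?thesis using x
    proof (induction rule: reach.induct)
      case (reach_parent x r')
      show ?case
      proof (cases "x \<in> M")
        case False
        then have "p x \<in> S - {r}" using PiE_mem[OF pf] reach_parent.prems by (auto simp: M_def)
        then obtain m where "reach p' M (p x) m" using reach_parent.IH by blast
        moreover have "p' x = p x" using False reach_parent.prems by (simp add: p'_def)
        ultimately show ?thesis using False by (metis reach.reach_parent)
      qed (blast intro: reach_root)
    qed simp
  qed
  moreover have "card {y \<in> S - {r} - M. p' y = x} \<in> (if x \<in> M then P else P)"
    if x: "x \<in> S - {r}" for x
  proof -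
    have "{y \<in> S - {r} - M. p' y = x} = {y \<in> S - {r}. p y = x}"
      using x by (auto simp: p'_def M_def)
    then show ?thesis using deg x by auto
  qed
  ultimately show ?thesis unfolding forests_def p'_def by blast
qed

lemma bij_betw_forests_root:
  assumes r: "r \<in> S"
  shows "bij_betw (\<lambda>(M, p). override_on p (\<lambda>_. r) M)
    (SIGMA M:{M. M \<subseteq> S - {r} \<and> card M \<in> Q}. forests P P (S - {r}) M) (forests P Q S {r})"
proof (rule bij_betw_byWitness[where f' = "\<lambda>p. let M = {y \<in> S - {r}. p y = r} in
    (M, restrict p (S - {r} - M))"])
  show "\<forall>a\<in>SIGMA M:{M. M \<subseteq> S - {r} \<and> card M \<in> Q}. forests P P (S - {r}) M.
      (let M = {y \<in> S - {r}. (\<lambda>(M, p). override_on p (\<lambda>_. r) M) a y = r}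
       in (M, restrict ((\<lambda>(M, p). override_on p (\<lambda>_. r) M) a) (S - {r} - M))) = a"
    using override_on_root_forests(2,3)[OF r] by (clarsimp simp: Let_def)
  show "\<forall>p\<in>forests P Q S {r}. (\<lambda>(M, p). override_on p (\<lambda>_. r) M)
      (let M = {y \<in> S - {r}. p y = r} in (M, restrict p (S - {r} - M))) = p"
    by (auto simp: forests_def Let_def override_on_def fun_eq_iff PiE_def extensional_def)
  show "(\<lambda>(M, p). override_on p (\<lambda>_. r) M) `
      (SIGMA M:{M. M \<subseteq> S - {r} \<and> card M \<in> Q}. forests P P (S - {r}) M) \<subseteq> forests P Q S {r}"
    using override_on_root_forests(1)[OF r] by auto
  show "(\<lambda>p. let M = {y \<in> S - {r}. p y = r} in (M, restrict p (S - {r} - M))) ` forests P Q S {r}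
      \<subseteq> (SIGMA M:{M. M \<subseteq> S - {r} \<and> card M \<in> Q}. forests P P (S - {r}) M)"
  proof (rule image_subsetI)
    fix p assume p: "p \<in> forests P Q S {r}"
    then have "card {y \<in> S - {r}. p y = r} \<in> Q" using r by (auto simp: forests_def)
    with restrict_root_forests[OF r p]
    show "(let M = {y \<in> S - {r}. p y = r} in (M, restrict p (S - {r} - M)))
      \<in> (SIGMA M:{M. M \<subseteq> S - {r} \<and> card M \<in> Q}. forests P P (S - {r}) M)"
      by (auto simp: Let_def)
  qed
qed

lemma forest_count_root:
  "forest_count P Q (Suc m) 1 = (\<Sum>j\<le>m. (m choose j) * (if j \<in> Q then forest_count P P m j else 0))"
proof -
  define S :: "nat set" where "S = {..<Suc m}"
  have fin: "finite (S - {m})" and r: "m \<in> S" and cS: "card (S - {m}) = m" by (auto simp: S_def)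
  have "finite {M. M \<subseteq> S - {m} \<and> card M \<in> Q}"
    by (rule finite_subset[of _ "Pow (S - {m})"]) (use fin in auto)
  moreover have "finite M" if "M \<subseteq> S - {m}" for M using that fin finite_subset by blast
  ultimately have "card (forests P Q S {m}) = (\<Sum>M | M \<subseteq> S - {m} \<and> card M \<in> Q. card (forests P P (S - {m}) M))"
    using bij_betw_same_card[OF bij_betw_forests_root[OF r]] fin by (simp add: finite_forests)
  also have "\<dots> = (\<Sum>M\<in>{M \<in> Pow (S - {m}). card M \<in> Q}. forest_count P P m (card M))"
    by (rule sum.cong) (use card_forests[OF fin] cS in auto)
  also have "\<dots> = (\<Sum>M\<in>Pow (S - {m}). if card M \<in> Q then forest_count P P m (card M) else 0)"
    by (rule sum.inter_filter) (use fin in auto)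
  also have "\<dots> = (\<Sum>j\<le>m. (m choose j) * (if j \<in> Q then forest_count P P m j else 0))"
    using sum_Pow_card[OF fin, of "\<lambda>j. if j \<in> Q then forest_count P P m j else 0"] cS by simp
  finally show ?thesis using card_forests[of S "{m}"] r by (simp add: S_def)
qed

section \<open>Labelled trees and functions\<close>

lemma ptrees_eq_forests: "ptrees P n = (SIGMA r:{1..n}. forests P P {1..n} {r})"
proof -
  have "(\<forall>x\<in>{1..n}. \<exists>k. (p ^^ k) x = r) \<longleftrightarrow> (\<forall>x\<in>{1..n}. \<exists>r'. reach p {r} x r')" for p r
    using reach_singleton_iff_funpow[of p r] reach_root_in by fastforce
  then show ?thesis by (auto simp: ptrees_def forests_def)
qed

lemma card_ptrees: "card (ptrees P n) = n * forest_count P P n 1"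
proof -
  have "card (ptrees P n) = (\<Sum>r\<in>{1..n}. card (forests P P {1..n} {r}))"
    unfolding ptrees_eq_forests by (rule card_SigmaI) (auto intro: finite_forests)
  also have "\<dots> = (\<Sum>r\<in>{1..n}. forest_count P P n 1)"
    by (rule sum.cong[OF refl]) (subst card_forests, auto)
  finally show ?thesis by simp
qed

lemma funpow_in: "f ` A \<subseteq> A \<Longrightarrow> x \<in> A \<Longrightarrow> (f ^^ k) x \<in> A"
  by (induction k) auto

lemma funpow_cong_on: "f ` A \<subseteq> A \<Longrightarrow> \<forall>y\<in>A. g y = f y \<Longrightarrow> x \<in> A \<Longrightarrow> (g ^^ k) x = (f ^^ k) x"
  by (induction k) (auto simp: funpow_in)

lemma funpow_eventually_periodic:
  assumes "finite A" "f ` A \<subseteq> A" "x \<in> A"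
  obtains a j where "j \<ge> 1" "(f ^^ j) ((f ^^ a) x) = (f ^^ a) x"
proof -
  have "(\<lambda>i. (f ^^ i) x) ` {..card A} \<subseteq> A" using funpow_in[OF assms(2,3)] by blast
  then have "\<not> inj_on (\<lambda>i. (f ^^ i) x) {..card A}"
    using card_inj_on_le[OF _ _ assms(1)] by fastforce
  then obtain a b where "a < b" "(f ^^ a) x = (f ^^ b) x"
    by (auto simp: inj_on_def) (metis linorder_neqE_nat)
  moreover have "(f ^^ (b - a)) ((f ^^ a) x) = (f ^^ (b - a + a)) x" by (simp add: funpow_add)
  ultimately show thesis using that[of "b - a" a] by (simp add: le_add_diff_inverse2)
qed

definition cyclic_points :: "nat \<Rightarrow> (nat \<Rightarrow> nat) \<Rightarrow> nat set" where
  "cyclic_points n f = {x \<in> {1..n}. \<exists>j\<ge>1. (f ^^ j) x = x}"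

lemma cyc_eq_card_cyclic_points: "cyc n f = card (cyclic_points n f)"
  by (simp add: cyc_def cyclic_points_def)

lemma funpow_cyclic_points:
  assumes "f ` {1..n} \<subseteq> {1..n}" "x \<in> cyclic_points n f"
  shows "(f ^^ i) x \<in> cyclic_points n f"
proof -
  obtain j where j: "j \<ge> 1" "(f ^^ j) x = x" and x: "x \<in> {1..n}"
    using assms(2) by (auto simp: cyclic_points_def)
  have "(f ^^ j) ((f ^^ i) x) = (f ^^ i) ((f ^^ j) x)"
    by (metis add.commute comp_apply funpow_add)
  then show ?thesis using j funpow_in[OF assms(1) x] by (auto simp: cyclic_points_def)
qed

lemma bij_betw_cyclic_points:
  assumes "f ` {1..n} \<subseteq> {1..n}"
  shows "bij_betw f (cyclic_points n f) (cyclic_points n f)"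
proof -
  let ?Z = "cyclic_points n f"
  have "f ` ?Z \<subseteq> ?Z" using funpow_cyclic_points[OF assms, of _ 1] by auto
  moreover have "?Z \<subseteq> f ` ?Z"
  proof
    fix x assume x: "x \<in> ?Z"
    then obtain j where j: "j \<ge> 1" "(f ^^ j) x = x" by (auto simp: cyclic_points_def)
    have "f ((f ^^ (j - 1)) x) = (f ^^ Suc (j - 1)) x" by simp
    with j have "x = f ((f ^^ (j - 1)) x)" by simp
    then show "x \<in> f ` ?Z" using funpow_cyclic_points[OF assms x] by blast
  qed
  moreover have "finite ?Z" by (simp add: cyclic_points_def)
  ultimately show ?thesis unfolding bij_betw_def using finite_surj_inj by blast
qed

lemma permutes_cyclic_points:
  assumes "f ` {1..n} \<subseteq> {1..n}"
  shows "override_on id f (cyclic_points n f) permutes cyclic_points n f"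
proof (rule bij_imp_permutes)
  show "bij_betw (override_on id f (cyclic_points n f)) (cyclic_points n f) (cyclic_points n f)"
    using bij_betw_cyclic_points[OF assms] by (rule bij_betw_cong[THEN iffD1, rotated]) simp
qed simp

lemma shiftP_iff: "m \<in> shiftP P \<longleftrightarrow> Suc m \<in> P"
  by (force simp: shiftP_def)

lemma card_fibre_override_on_permutes:
  assumes "\<sigma> permutes Z" "Z \<subseteq> S" "finite S"
  shows "card {y \<in> S. override_on p \<sigma> Z y = x} = (if x \<in> Z then 1 else 0) + card {y \<in> S - Z. p y = x}"
proof -
  have "{y \<in> Z. \<sigma> y = x} = (if x \<in> Z then {inv \<sigma> x} else {})"
    using assms(1) permutes_in_image[OF assms(1)] permutes_inv[OF assms(1)]
    by (auto simp: permutes_inverses permutes_in_image)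
  moreover have "{y \<in> S. override_on p \<sigma> Z y = x} = {y \<in> Z. \<sigma> y = x} \<union> {y \<in> S - Z. p y = x}"
    using assms(2) by (auto simp: override_on_def)
  moreover have "card ({y \<in> Z. \<sigma> y = x} \<union> {y \<in> S - Z. p y = x}) =
      card {y \<in> Z. \<sigma> y = x} + card {y \<in> S - Z. p y = x}"
    using assms(2,3) by (intro card_Un_disjoint) (auto intro: finite_subset)
  ultimately show ?thesis by (simp split: if_splits)
qed

lemma override_on_in_pfuns:
  assumes Z: "Z \<subseteq> {1..n}" and \<sigma>: "\<sigma> permutes Z" and p: "p \<in> forests P (shiftP P) {1..n} Z"
  shows "override_on p \<sigma> Z \<in> pfuns P n"
proof -
  have pf: "p \<in> ({1..n} - Z) \<rightarrow>\<^sub>E {1..n}"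
    and deg: "\<forall>x\<in>{1..n}. card {y \<in> {1..n} - Z. p y = x} \<in> (if x \<in> Z then shiftP P else P)"
    using p by (auto simp: forests_def)
  have "\<forall>x\<in>Z. \<sigma> x \<in> {1..n}" using permutes_in_image[OF \<sigma>] Z by blast
  then have "override_on p \<sigma> Z \<in> {1..n} \<rightarrow>\<^sub>E {1..n}"
    using PiE_mem[OF pf] PiE_arb[OF pf] Z by (auto simp: override_on_def PiE_iff extensional_def)
  moreover have "card {y \<in> {1..n}. override_on p \<sigma> Z y = x} \<in> P" if x: "x \<in> {1..n}" for x
  proof -
    have "card {y \<in> {1..n} - Z. p y = x} \<in> (if x \<in> Z then shiftP P else P)" using deg x by blast
    then show ?thesis using card_fibre_override_on_permutes[OF \<sigma> Z, of p x] by (auto simp: shiftP_iff)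
  qed
  ultimately show ?thesis by (simp add: pfuns_def)
qed

lemma cyclic_points_override_on:
  assumes Z: "Z \<subseteq> {1..n}" and \<sigma>: "\<sigma> permutes Z" and p: "p \<in> forests P Q {1..n} Z"
  shows "cyclic_points n (override_on p \<sigma> Z) = Z"
proof (intro equalityI subsetI)
  let ?f = "override_on p \<sigma> Z"
  have fZ: "?f ` Z \<subseteq> Z" using permutes_in_image[OF \<sigma>] by auto
  fix x
  assume "x \<in> cyclic_points n ?f"
  then obtain j where x: "x \<in> {1..n}" and j: "j \<ge> 1" "(?f ^^ j) x = x"
    by (auto simp: cyclic_points_def)
  have "\<forall>x\<in>{1..n}. \<exists>r. reach p Z x r" using p by (simp add: forests_def)
  then obtain r where "reach p Z x r" using x by blast
  then have "reach ?f Z x r" by (rule reach_cong[where A = UNIV]) auto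
  then obtain d where d: "(?f ^^ d) x \<in> Z" using reach_imp_funpow reach_root_in by metis
  have "((?f ^^ j) ^^ d) x \<in> {x}" using j by (intro funpow_in) auto
  then have "x = (?f ^^ (j * d - d + d)) x" using j by (simp add: funpow_mult)
  also have "\<dots> = (?f ^^ (j * d - d)) ((?f ^^ d) x)" by (simp add: funpow_add)
  finally show "x \<in> Z" using funpow_in[OF fZ d, of "j * d - d"] by simp
next
  let ?f = "override_on p \<sigma> Z"
  fix x assume x: "x \<in> Z"
  have "permutation \<sigma>" using \<sigma> Z by (auto simp: permutation_permutes intro: finite_subset)
  then obtain j where "j > 0" "(\<sigma> ^^ j) x = x" by (rule permutation_self)
  moreover have "(?f ^^ j) x = (\<sigma> ^^ j) x"
    using permutes_in_image[OF \<sigma>] x by (intro funpow_cong_on) auto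
  ultimately have "j \<ge> 1" "(?f ^^ j) x = x" by simp_all
  moreover have "x \<in> {1..n}" using x Z by blast
  ultimately show "x \<in> cyclic_points n ?f" unfolding cyclic_points_def by blast
qed

lemma restrict_cyclic_points_forests:
  assumes f: "f \<in> pfuns P n"
  defines "Z \<equiv> cyclic_points n f"
  shows "restrict f ({1..n} - Z) \<in> forests P (shiftP P) {1..n} Z"
proof -
  define S :: "nat set" where "S = {1..n}"
  define p where "p = restrict f (S - Z)"
  have ff: "f \<in> S \<rightarrow>\<^sub>E S" and fib: "\<forall>x\<in>S. card {y \<in> S. f y = x} \<in> P"
    using f by (auto simp: pfuns_def S_def)
  have fS: "f ` S \<subseteq> S" using ff by auto
  have ZS: "Z \<subseteq> S" by (auto simp: Z_def S_def cyclic_points_def)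
  have "p \<in> (S - Z) \<rightarrow>\<^sub>E S" using fS by (auto simp: p_def)
  moreover have "\<exists>r. reach p Z x r" if x: "x \<in> S" for x
  proof -
    obtain a j where "j \<ge> 1" "(f ^^ j) ((f ^^ a) x) = (f ^^ a) x"
      by (rule funpow_eventually_periodic[OF _ fS x]) (simp add: S_def)
    then have "(f ^^ a) x \<in> Z" using funpow_in[OF fS x] by (auto simp: Z_def S_def cyclic_points_def)
    then obtain r where "reach f Z x r" using funpow_in_imp_reach by metis
    then have "reach p Z x r" by (rule reach_cong[where A = S]) (use x fS in \<open>auto simp: p_def\<close>)
    then show ?thesis by blast
  qed
  moreover have "card {y \<in> S - Z. p y = x} \<in> (if x \<in> Z then shiftP P else P)" if x: "x \<in> S" for x
  proof -
    have \<sigma>: "override_on id f Z permutes Z"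
      using permutes_cyclic_points[of f n] fS by (simp add: Z_def S_def)
    have "f = override_on p (override_on id f Z) Z"
      using ff ZS by (auto simp: p_def override_on_def fun_eq_iff PiE_def extensional_def)
    then have "card {y \<in> S. f y = x} = (if x \<in> Z then 1 else 0) + card {y \<in> S - Z. p y = x}"
      using card_fibre_override_on_permutes[OF \<sigma> ZS, of p x] by (simp add: S_def)
    then show ?thesis using fib x by (auto simp: shiftP_iff)
  qed
  ultimately show ?thesis unfolding forests_def p_def S_def by blast
qed

lemma decompose_override_on_pfuns:
  assumes Z: "Z \<subseteq> {1..n}" and \<sigma>: "\<sigma> permutes Z" and p: "p \<in> forests P Q {1..n} Z"
  shows "cyclic_points n (override_on p \<sigma> Z) = Z"
    and "override_on id (override_on p \<sigma> Z) Z = \<sigma>"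
    and "restrict (override_on p \<sigma> Z) ({1..n} - Z) = p"
proof -
  show "cyclic_points n (override_on p \<sigma> Z) = Z" by (rule cyclic_points_override_on[OF assms])
  show "override_on id (override_on p \<sigma> Z) Z = \<sigma>"
    using permutes_not_in[OF \<sigma>] by (auto simp: override_on_def fun_eq_iff)
  show "restrict (override_on p \<sigma> Z) ({1..n} - Z) = p"
    using p by (auto simp: forests_def restrict_def PiE_def extensional_def fun_eq_iff)
qed

lemma bij_betw_pfuns:
  "bij_betw (\<lambda>(Z, \<sigma>, p). override_on p \<sigma> Z)
    (SIGMA Z:Pow {1..n}. {\<sigma>. \<sigma> permutes Z} \<times> forests P (shiftP P) {1..n} Z) (pfuns P n)"
proof (rule bij_betw_byWitness[where f' = "\<lambda>f. let Z = cyclic_points n f in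
    (Z, override_on id f Z, restrict f ({1..n} - Z))"])
  show "\<forall>a\<in>SIGMA Z:Pow {1..n}. {\<sigma>. \<sigma> permutes Z} \<times> forests P (shiftP P) {1..n} Z.
      (let Z = cyclic_points n ((\<lambda>(Z, \<sigma>, p). override_on p \<sigma> Z) a) in
        (Z, override_on id ((\<lambda>(Z, \<sigma>, p). override_on p \<sigma> Z) a) Z,
         restrict ((\<lambda>(Z, \<sigma>, p). override_on p \<sigma> Z) a) ({1..n} - Z))) = a"
    by (auto simp: Let_def decompose_override_on_pfuns simp del: One_nat_def)
  show "\<forall>f\<in>pfuns P n. (\<lambda>(Z, \<sigma>, p). override_on p \<sigma> Z)
      (let Z = cyclic_points n f in (Z, override_on id f Z, restrict f ({1..n} - Z))) = f"
    by (auto simp: pfuns_def cyclic_points_def Let_def override_on_def fun_eq_iff PiE_def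
        extensional_def)
  show "(\<lambda>(Z, \<sigma>, p). override_on p \<sigma> Z) `
      (SIGMA Z:Pow {1..n}. {\<sigma>. \<sigma> permutes Z} \<times> forests P (shiftP P) {1..n} Z) \<subseteq> pfuns P n"
    using override_on_in_pfuns by auto
  show "(\<lambda>f. let Z = cyclic_points n f in (Z, override_on id f Z, restrict f ({1..n} - Z))) `
      pfuns P n \<subseteq> (SIGMA Z:Pow {1..n}. {\<sigma>. \<sigma> permutes Z} \<times> forests P (shiftP P) {1..n} Z)"
  proof (rule image_subsetI)
    fix f assume f: "f \<in> pfuns P n"
    then have "f ` {1..n} \<subseteq> {1..n}" by (auto simp: pfuns_def)
    then show "(let Z = cyclic_points n f in (Z, override_on id f Z, restrict f ({1..n} - Z)))
      \<in> (SIGMA Z:Pow {1..n}. {\<sigma>. \<sigma> permutes Z} \<times> forests P (shiftP P) {1..n} Z)"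
      using permutes_cyclic_points restrict_cyclic_points_forests[OF f]
      by (auto simp: Let_def cyclic_points_def)
  qed
qed

lemma sum_pfuns_cyc:
  fixes g :: "nat \<Rightarrow> 'b::comm_semiring_1"
  shows "(\<Sum>f\<in>pfuns P n. g (cyc n f)) =
    (\<Sum>k\<le>n. of_nat ((n choose k) * fact k * forest_count P (shiftP P) n k) * g k)"
proof -
  define B where "B Z = {\<sigma>. \<sigma> permutes Z} \<times> forests P (shiftP P) {1..n} Z" for Z
  have fin: "finite Z" if "Z \<in> Pow {1..n}" for Z using that finite_subset by auto
  have "(\<Sum>f\<in>pfuns P n. g (cyc n f)) =
      (\<Sum>a\<in>Sigma (Pow {1..n}) B. g (cyc n ((\<lambda>(Z, \<sigma>, p). override_on p \<sigma> Z) a)))"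
    unfolding B_def by (rule sum.reindex_bij_betw[OF bij_betw_pfuns, symmetric])
  also have "\<dots> = (\<Sum>(Z, \<sigma>, p)\<in>Sigma (Pow {1..n}) B. g (cyc n (override_on p \<sigma> Z)))"
    by (rule sum.cong) auto
  also have "\<dots> = (\<Sum>Z\<in>Pow {1..n}. \<Sum>(\<sigma>, p)\<in>B Z. g (cyc n (override_on p \<sigma> Z)))"
    by (rule sum.Sigma[symmetric]) (auto simp: B_def fin finite_permutations finite_forests)
  also have "\<dots> = (\<Sum>Z\<in>Pow {1..n}. of_nat (fact (card Z) * forest_count P (shiftP P) n (card Z)) *
      g (card Z))"
  proof (rule sum.cong[OF refl])
    fix Z assume Z: "Z \<in> Pow {1..n}"
    then have "(\<Sum>(\<sigma>, p)\<in>B Z. g (cyc n (override_on p \<sigma> Z))) = (\<Sum>(\<sigma>, p)\<in>B Z. g (card Z))"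
      by (intro sum.cong refl) (auto simp: B_def cyc_eq_card_cyclic_points cyclic_points_override_on)
    also have "\<dots> = of_nat (fact (card Z) * forest_count P (shiftP P) n (card Z)) * g (card Z)"
      using Z card_permutations[OF refl fin[OF Z]] card_forests[of "{1..n}" Z]
      by (simp add: B_def card_cartesian_product)
    finally show "(\<Sum>(\<sigma>, p)\<in>B Z. g (cyc n (override_on p \<sigma> Z))) =
      of_nat (fact (card Z) * forest_count P (shiftP P) n (card Z)) * g (card Z)" .
  qed
  also have "\<dots> = (\<Sum>k\<le>n. of_nat ((n choose k) * fact k * forest_count P (shiftP P) n k) * g k)"
    by (subst sum_Pow_card) (simp_all add: mult_ac)
  finally show ?thesis .
qed

section \<open>Generating functions\<close>

unbundle fps_syntax

definition egf :: "(nat \<Rightarrow> nat) \<Rightarrow> 'a::field_char_0 fps" where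
  "egf a = Abs_fps (\<lambda>n. of_nat (a n) / fact n)"

lemma egf_nth [simp]: "egf a $ n = of_nat (a n) / fact n"
  by (simp add: egf_def)

lemma choose_div_fact:
  assumes "k \<le> n"
  shows "(of_nat (n choose k) / fact n :: 'a::field_char_0) = 1 / (fact k * fact (n - k))"
  by (simp add: binomial_fact[OF assms])

lemma egf_mult: "(egf a * egf b :: 'a::field_char_0 fps) = egf (\<lambda>n. \<Sum>i\<le>n. (n choose i) * a i * b (n - i))"
proof (rule fps_ext)
  fix n
  have "(egf a * egf b :: 'a fps) $ n = (\<Sum>i\<le>n. of_nat (a i) / fact i * (of_nat (b (n - i)) / fact (n - i)))"
    by (simp add: fps_mult_nth atLeast0AtMost)
  also have "\<dots> = (\<Sum>i\<le>n. of_nat (n choose i) / fact n * (of_nat (a i) * of_nat (b (n - i))))"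
    by (intro sum.cong refl) (simp add: choose_div_fact)
  also have "\<dots> = egf (\<lambda>n. \<Sum>i\<le>n. (n choose i) * a i * b (n - i)) $ n"
    by (simp add: sum_divide_distrib mult_ac)
  finally show "(egf a * egf b :: 'a fps) $ n = egf (\<lambda>n. \<Sum>i\<le>n. (n choose i) * a i * b (n - i)) $ n" .
qed

lemma fps_X_mult_egf: "(fps_X * egf a :: 'a::field_char_0 fps) = egf (\<lambda>n. n * a (n - 1))"
proof (rule fps_ext)
  fix n
  show "(fps_X * egf a :: 'a fps) $ n = egf (\<lambda>n. n * a (n - 1)) $ n"
  proof (cases n)
    case (Suc m)
    have "(of_nat (Suc m * a m) / fact (Suc m) :: 'a) = of_nat (Suc m) * of_nat (a m) / (of_nat (Suc m) * fact m)"
      by (simp only: of_nat_mult fact_Suc)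
    also have "\<dots> = of_nat (a m) / fact m"
      by (rule mult_divide_mult_cancel_left) (simp del: of_nat_Suc)
    finally have "(of_nat (Suc m * a m) / fact (Suc m) :: 'a) = of_nat (a m) / fact m" .
    then show ?thesis using Suc by simp
  qed simp
qed

text \<open>The EGF of rooted trees in which the root has a number of children in \<open>Q\<close> and every
  other vertex a number in \<open>P\<close>.\<close>

definition tree_egf :: "nat set \<Rightarrow> nat set \<Rightarrow> 'a::field_char_0 fps" where
  "tree_egf P Q = egf (\<lambda>n. n * forest_count P Q n 1)"

lemma treeGF_eq_tree_egf: "treeGF P = tree_egf P P"
  by (rule fps_ext) (simp add: treeGF_def tree_egf_def card_ptrees)

lemma tree_egf_eq_fps_X_mult: "tree_egf P Q = fps_X * egf (\<lambda>m. forest_count P Q (Suc m) 1)"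
  unfolding tree_egf_def fps_X_mult_egf by (rule arg_cong[where f = egf]) (auto simp: fun_eq_iff)

lemma tree_egf_power:
  "(tree_egf P Q :: 'a::field_char_0 fps) ^ k = fps_X ^ k * egf (\<lambda>m. forest_count P Q (m + k) k)"
proof (induction k)
  case 0
  show ?case by (rule fps_ext) (simp add: forest_count_no_roots)
next
  case (Suc k)
  have "(tree_egf P Q :: 'a fps) ^ Suc k = tree_egf P Q * (fps_X ^ k * egf (\<lambda>m. forest_count P Q (m + k) k))"
    by (simp only: power_Suc Suc.IH)
  also have "\<dots> = fps_X ^ Suc k *
      (egf (\<lambda>m. forest_count P Q (Suc m) 1) * egf (\<lambda>m. forest_count P Q (m + k) k))"
    by (simp add: tree_egf_eq_fps_X_mult mult_ac)
  also have "egf (\<lambda>m. forest_count P Q (Suc m) 1) * egf (\<lambda>m. forest_count P Q (m + k) k) =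
      (egf (\<lambda>m. forest_count P Q (m + Suc k) (Suc k)) :: 'a fps)"
    unfolding egf_mult forest_count_split by (intro arg_cong[where f = egf] ext sum.cong) simp_all
  finally show ?case .
qed

lemma tree_egf_power_nth:
  "(tree_egf P Q ^ k) $ n = (if n < k then 0 else of_nat (forest_count P Q n k) / fact (n - k))"
  by (simp add: tree_egf_power fps_X_power_mult_nth)

lemma tree_egf_shiftP: "tree_egf P (shiftP P) = fps_X * (expP (shiftP P) oo tree_egf P P)"
proof -
  have "egf (\<lambda>m. forest_count P (shiftP P) (Suc m) 1) = (expP (shiftP P) oo tree_egf P P)"
  proof (rule fps_ext)
    fix m
    have "egf (\<lambda>m. forest_count P (shiftP P) (Suc m) 1) $ m =
        (\<Sum>j\<le>m. of_nat (m choose j) / fact m * of_nat (if j \<in> shiftP P then forest_count P P m j else 0))"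
      using forest_count_root[of P "shiftP P" m] by (simp add: sum_divide_distrib)
    also have "\<dots> = (\<Sum>j=0..m. expP (shiftP P) $ j * (tree_egf P P ^ j) $ m)"
      by (intro sum.cong) (auto simp: choose_div_fact expP_def tree_egf_power_nth)
    finally show "egf (\<lambda>m. forest_count P (shiftP P) (Suc m) 1) $ m = (expP (shiftP P) oo tree_egf P P) $ m"
      by (simp add: fps_compose_nth)
  qed
  then show ?thesis by (simp add: tree_egf_eq_fps_X_mult)
qed

lemma sum_pfuns_cyc_div_fact:
  fixes g :: "nat \<Rightarrow> 'a::field_char_0"
  shows "(\<Sum>f\<in>pfuns P n. g (cyc n f)) / fact n = (\<Sum>k\<le>n. g k * (tree_egf P (shiftP P) ^ k) $ n)"
proof -
  have "(\<Sum>f\<in>pfuns P n. g (cyc n f)) / fact n =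
      (\<Sum>k\<le>n. of_nat (n choose k) / fact n * (fact k * of_nat (forest_count P (shiftP P) n k) * g k))"
    by (simp add: sum_pfuns_cyc sum_divide_distrib mult_ac)
  also have "\<dots> = (\<Sum>k\<le>n. g k * (tree_egf P (shiftP P) ^ k) $ n)"
    by (intro sum.cong refl) (simp add: choose_div_fact tree_egf_power_nth)
  finally show ?thesis .
qed

lemma funGF_nth: "funGF P $ n = (\<Sum>k\<le>n. (tree_egf P (shiftP P) ^ k) $ n)"
  using sum_pfuns_cyc_div_fact[where g = "\<lambda>_. 1"] by (simp add: funGF_def)

lemma XiCyc_nth: "XiCyc P $ n = (\<Sum>k\<le>n. of_nat k * (tree_egf P (shiftP P) ^ k) $ n)"
proof -
  have "pderiv (\<Sum>f\<in>A. monom (1 :: 'a) (cyc n f)) = (\<Sum>f\<in>A. pderiv (monom 1 (cyc n f)))" for A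
    using higher_pderiv_sum[of 1 "\<lambda>f. monom (1 :: 'a) (cyc n f)" A] by simp
  then have "XiCyc P $ n = (\<Sum>f\<in>pfuns P n. of_nat (cyc n f)) / (fact n :: 'a)"
    by (simp add: XiCyc_def funCycGF_def pderiv_smult pderiv_monom poly_sum poly_monom)
  then show ?thesis using sum_pfuns_cyc_div_fact[where g = of_nat] by simp
qed

lemma fps_mult_nth_cong:
  "(\<And>m. m \<le> n \<Longrightarrow> A $ m = B $ m) \<Longrightarrow> (C * A) $ n = (C * B) $ n"
  by (simp add: fps_mult_nth)

lemma fps_nth_sum_powers_cong:
  fixes R :: "'a::comm_ring_1 fps" and c :: "nat \<Rightarrow> 'a"
  assumes "R $ 0 = 0" "m \<le> N"
  shows "(\<Sum>k\<le>m. c k * (R ^ k) $ m) = (\<Sum>k\<le>N. fps_const (c k) * R ^ k) $ m"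
proof -
  have "(\<Sum>k\<le>N. fps_const (c k) * R ^ k) $ m = (\<Sum>k\<le>N. c k * (R ^ k) $ m)"
    by (simp add: fps_sum_nth)
  also have "\<dots> = (\<Sum>k\<le>m. c k * (R ^ k) $ m)"
    using assms startsby_zero_power_prefix[OF assms(1)] by (intro sum.mono_neutral_right) auto
  finally show ?thesis ..
qed

lemma sum_weighted_geometric:
  fixes R :: "'a::comm_ring_1"
  shows "(1 - R)^2 * (\<Sum>k\<le>N. of_nat k * R ^ k) = R - of_nat (Suc N) * R ^ Suc N + of_nat N * R ^ Suc (Suc N)"
proof (induction N)
  case (Suc N)
  have "(1 - R)^2 * R ^ Suc N = R ^ Suc N - 2 * R ^ Suc (Suc N) + R ^ Suc (Suc (Suc N))"
    by (simp add: power2_eq_square algebra_simps)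
  moreover have "(1 - R)^2 * (\<Sum>k\<le>Suc N. of_nat k * R ^ k) =
      (1 - R)^2 * (\<Sum>k\<le>N. of_nat k * R ^ k) + of_nat (Suc N) * ((1 - R)^2 * R ^ Suc N)"
    by (simp add: algebra_simps)
  ultimately show ?case by (simp only: Suc.IH) (simp add: algebra_simps)
qed (simp add: power2_eq_square algebra_simps)

lemma fps_geometric_series:
  fixes R G :: "'a::comm_ring_1 fps"
  assumes R0: "R $ 0 = 0" and G: "\<And>n. G $ n = (\<Sum>k\<le>n. (R ^ k) $ n)"
  shows "(1 - R) * G = 1"
proof (rule fps_ext)
  fix n
  have "((1 - R) * G) $ n = ((1 - R) * (\<Sum>k\<le>n. R ^ k)) $ n"
    using fps_nth_sum_powers_cong[OF R0, where c = "\<lambda>_. 1"] by (intro fps_mult_nth_cong) (simp add: G)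
  also have "\<dots> = (1 - R ^ Suc n) $ n" by (simp only: sum_gp_basic)
  also have "\<dots> = 1 $ n" using startsby_zero_power_prefix[OF R0, of "Suc n"] by simp
  finally show "((1 - R) * G) $ n = 1 $ n" .
qed

lemma fps_weighted_geometric_series:
  fixes R X :: "'a::comm_ring_1 fps"
  assumes R0: "R $ 0 = 0" and X: "\<And>n. X $ n = (\<Sum>k\<le>n. of_nat k * (R ^ k) $ n)"
  shows "(1 - R)^2 * X = R"
proof (rule fps_ext)
  fix n
  have "((1 - R)^2 * X) $ n = ((1 - R)^2 * (\<Sum>k\<le>n. of_nat k * R ^ k)) $ n"
    using fps_nth_sum_powers_cong[OF R0, where c = of_nat]
    by (intro fps_mult_nth_cong) (simp add: X fps_of_nat[symmetric])
  also have "\<dots> = (R - of_nat (Suc n) * R ^ Suc n + of_nat n * R ^ Suc (Suc n)) $ n"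
    by (simp only: sum_weighted_geometric)
  also have "\<dots> = R $ n"
    using startsby_zero_power_prefix[OF R0, of "Suc n"] startsby_zero_power_prefix[OF R0, of "Suc (Suc n)"]
    by (simp add: fps_of_nat[symmetric])
  finally show "((1 - R)^2 * X) $ n = R $ n" .
qed

theorem theorem5p10:
  fixes P :: "nat set"
  shows "(XiCyc P :: 'a::field_char_0 fps)
         = fps_X * (expP (shiftP P) oo treeGF P) * (funGF P)^2"
proof -
  define R :: "'a fps" where "R = tree_egf P (shiftP P)"
  have R0: "R $ 0 = 0" by (simp add: R_def tree_egf_def)
  have F: "(1 - R) * funGF P = 1"
    by (rule fps_geometric_series[OF R0]) (simp add: R_def funGF_nth)
  have Xi: "(1 - R)^2 * XiCyc P = R"
    by (rule fps_weighted_geometric_series[OF R0]) (simp add: R_def XiCyc_nth)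
  have "XiCyc P = XiCyc P * ((1 - R) * funGF P)^2" by (simp add: F)
  also have "\<dots> = ((1 - R)^2 * XiCyc P) * funGF P ^ 2" by (simp only: power_mult_distrib mult_ac)
  also have "\<dots> = R * funGF P ^ 2" by (simp only: Xi)
  also have "\<dots> = fps_X * (expP (shiftP P) oo treeGF P) * (funGF P)^2"
    by (simp add: R_def tree_egf_shiftP treeGF_eq_tree_egf)
  finally show ?thesis .
qed

end
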